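(* Let $E$ be an AM-space, let $X$ be an arbitrary Banach space and let $T:E\to X$ be a continuous operator. Then $T$ is uaw-Dunford–Pettis if and only if $T$ is Dunford–Pettis.
   Context: A net $(x_\alpha)$ in a Banach lattice $E$ is uaw-convergent to $x$ (written $x_\alpha\xrightarrow{uaw}x$) if $|x_\alpha-x|\wedge u\to 0$ weakly for every $u\in E_+$. An operator $T$ from a Banach lattice $E$ into a Banach space $X$ is uaw-Dunford–Pettis if for every norm bounded sequence $(x_n)$ in $E$ with $x_n\xrightarrow{uaw}0$ one has $\|Tx_n\|\to 0$. An operator is Dunford–Pettis if it maps weakly null sequences to norm null sequences. *)

theory Defs
  imports "HOL-Analysis.Analysis"
begin

class banach_lattice = banach + ordered_real_vector + lattice +
  assumes lattice_norm: "sup x (- x) \<le> sup y (- y) \<Longrightarrow> norm x \<le> norm y"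

definition lmod :: "'a::banach_lattice \<Rightarrow> 'a" where
  "lmod x = sup x (- x)"

class am_space = banach_lattice +
  assumes am_norm: "0 \<le> x \<Longrightarrow> 0 \<le> y \<Longrightarrow> norm (sup x y) = max (norm x) (norm y)"

definition weakly_convergent_to :: "(nat \<Rightarrow> 'a::real_normed_vector) \<Rightarrow> 'a \<Rightarrow> bool" where
  "weakly_convergent_to x l \<longleftrightarrow>
     (\<forall>f::'a \<Rightarrow> real. bounded_linear f \<longrightarrow> (\<lambda>n. f (x n)) \<longlonglongrightarrow> f l)"

definition uaw_convergent_to :: "(nat \<Rightarrow> 'a::banach_lattice) \<Rightarrow> 'a \<Rightarrow> bool" where
  "uaw_convergent_to x l \<longleftrightarrow>
     (\<forall>u. 0 \<le> u \<longrightarrow> weakly_convergent_to (\<lambda>n. inf (lmod (x n - l)) u) 0)"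

definition dunford_pettis :: "('a::real_normed_vector \<Rightarrow> 'b::real_normed_vector) \<Rightarrow> bool" where
  "dunford_pettis T \<longleftrightarrow>
     (\<forall>x. weakly_convergent_to x 0 \<longrightarrow> (\<lambda>n. norm (T (x n))) \<longlonglongrightarrow> 0)"

definition uaw_dunford_pettis :: "('a::banach_lattice \<Rightarrow> 'b::real_normed_vector) \<Rightarrow> bool" where
  "uaw_dunford_pettis T \<longleftrightarrow>
     (\<forall>x. bounded (range x) \<longrightarrow> uaw_convergent_to x 0 \<longrightarrow> (\<lambda>n. norm (T (x n))) \<longlonglongrightarrow> 0)"

end

theory Submission
  imports Defs "HOL-Library.Lattice_Algebras"
begin

text \<open>In an AM-space the bounded uaw-null sequences are exactly the weakly null ones; as every
  weakly null sequence is bounded, the two operator classes coincide. Since every bounded functional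
  is a difference of positive ones, only positive functionals P need to be tested.

  If x n is bounded and uaw-null, choose w \<ge> 0 almost maximising P on the positive part of a ball
  containing all lmod (x n). The AM-norm keeps sup (lmod (x n)) w in that ball, so P (lmod (x n)) is
  at most P (inf (lmod (x n)) w) plus a small error.

  For the converse we need real lattice homomorphisms of norm at most one. A Hahn-Banach argument with
  Zorn's lemma, applied to sublinear functionals p with p (sup x y) \<le> max (p x) (p y), yields such a
  homomorphism that is at least \<eta> on a given decreasing sequence of positive elements of norm at
  least \<eta>. These homomorphisms are norming, so Baire's theorem in the dual shows that weakly null
  sequences are bounded. If P (inf (lmod (x n)) u) did not tend to zero, decreasing minorants of
  block suprema of the inf (lmod (x n)) u would carry a homomorphism that is large on them, hence
  large on lmod (x k) for arbitrarily late k, contradicting weak convergence of x.\<close>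

section \<open>Vector lattices\<close>

class vector_lattice = ordered_real_vector + lattice

subclass (in vector_lattice) lattice_ab_group_add ..

subclass (in banach_lattice) vector_lattice ..

lemma scaleR_sup_distrib:
  fixes a b :: "'a::vector_lattice"
  assumes c: "0 \<le> c"
  shows "c *\<^sub>R sup a b = sup (c *\<^sub>R a) (c *\<^sub>R b)"
proof (cases "c = 0")
  case False
  with c have c': "0 < c" by simp
  have "sup a b \<le> inverse c *\<^sub>R sup (c *\<^sub>R a) (c *\<^sub>R b)"
  proof (rule sup_least)
    have "a = inverse c *\<^sub>R (c *\<^sub>R a)" using c' by simp
    also have "\<dots> \<le> inverse c *\<^sub>R sup (c *\<^sub>R a) (c *\<^sub>R b)"
      by (rule scaleR_left_mono) (use c' in auto)
    finally show "a \<le> inverse c *\<^sub>R sup (c *\<^sub>R a) (c *\<^sub>R b)" .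
    have "b = inverse c *\<^sub>R (c *\<^sub>R b)" using c' by simp
    also have "\<dots> \<le> inverse c *\<^sub>R sup (c *\<^sub>R a) (c *\<^sub>R b)"
      by (rule scaleR_left_mono) (use c' in auto)
    finally show "b \<le> inverse c *\<^sub>R sup (c *\<^sub>R a) (c *\<^sub>R b)" .
  qed
  then have "c *\<^sub>R sup a b \<le> c *\<^sub>R (inverse c *\<^sub>R sup (c *\<^sub>R a) (c *\<^sub>R b))"
    by (rule scaleR_left_mono) (use c in auto)
  then have "c *\<^sub>R sup a b \<le> sup (c *\<^sub>R a) (c *\<^sub>R b)" using c' by simp
  moreover have "sup (c *\<^sub>R a) (c *\<^sub>R b) \<le> c *\<^sub>R sup a b"
    by (intro sup_least scaleR_left_mono) (use c in auto)
  ultimately show ?thesis by (rule order.antisym)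
qed simp

lemma pprt_scaleR: "0 \<le> c \<Longrightarrow> pprt (c *\<^sub>R x) = c *\<^sub>R pprt (x::'a::vector_lattice)"
  unfolding pprt_def by (simp add: scaleR_sup_distrib)

lemma pprt_minus_pprt_neg: "pprt x - pprt (- x) = x"
  by (simp add: pprt_neg flip: prts)

lemma riesz_decomposition:
  fixes y a b :: "'a::lattice_ab_group_add"
  assumes "0 \<le> y" "y \<le> a + b" "0 \<le> a" "0 \<le> b"
  shows "\<exists>y1 y2. y = y1 + y2 \<and> 0 \<le> y1 \<and> y1 \<le> a \<and> 0 \<le> y2 \<and> y2 \<le> b"
proof (intro exI conjI)
  show "y = inf y a + (y - inf y a)" by (metis add.commute diff_add_cancel)
  show "0 \<le> inf y a" "inf y a \<le> a" using assms by auto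
  show "0 \<le> y - inf y a" by (simp only: diff_ge_0_iff_ge inf_le1)
  have "y \<le> inf (b + y) (b + a)" using assms by (simp add: add_increasing add.commute)
  also have "\<dots> = b + inf y a" by (rule add_inf_distrib_left[symmetric])
  finally show "y - inf y a \<le> b" by (simp only: diff_le_eq)
qed

section \<open>Sublinear lattice functionals\<close>

definition sublinear_lattice_functional :: "('a::vector_lattice \<Rightarrow> real) \<Rightarrow> bool" where
  "sublinear_lattice_functional p \<longleftrightarrow>
     (\<forall>x y. p (x + y) \<le> p x + p y) \<and> (\<forall>c x. 0 \<le> c \<longrightarrow> p (c *\<^sub>R x) = c * p x) \<and>
     (\<forall>x y. p (sup x y) \<le> max (p x) (p y))"

lemma sublinear_lattice_functionalI:
  assumes "\<And>x y. p (x + y) \<le> p x + p y"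
    and "p 0 = 0" and "\<And>c x. 0 < c \<Longrightarrow> p (c *\<^sub>R x) \<le> c * p x"
    and "\<And>x y. p (sup x y) \<le> max (p x) (p y)"
  shows "sublinear_lattice_functional p"
proof -
  have "p (c *\<^sub>R x) = c * p x" if c: "0 < c" for c x
  proof -
    have "p x = p (inverse c *\<^sub>R (c *\<^sub>R x))" using c by simp
    also have "\<dots> \<le> inverse c * p (c *\<^sub>R x)" using c by (intro assms(3)) simp
    finally have "c * p x \<le> p (c *\<^sub>R x)" using c by (simp add: field_simps)
    with assms(3)[OF c, of x] show ?thesis by simp
  qed
  then show ?thesis
    using assms unfolding sublinear_lattice_functional_def
    by (metis less_eq_real_def scale_zero_left mult_zero_left)
qed

lemma sublinear_lattice_functionalD:
  assumes "sublinear_lattice_functional p"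
  shows "p (x + y) \<le> p x + p y" and "0 \<le> c \<Longrightarrow> p (c *\<^sub>R x) = c * p x"
    and "p (sup x y) \<le> max (p x) (p y)"
  using assms unfolding sublinear_lattice_functional_def by auto

lemma sublinear_lattice_functional_0: "sublinear_lattice_functional p \<Longrightarrow> p 0 = 0"
  using sublinear_lattice_functionalD(2)[of p 0 0] by simp

lemma sublinear_lattice_functional_neg_le: "sublinear_lattice_functional p \<Longrightarrow> - p (- x) \<le> p x"
  using sublinear_lattice_functionalD(1)[of p x "- x"] sublinear_lattice_functional_0[of p] by simp

lemma le_cINF_add_cINF:
  fixes f :: "'i \<Rightarrow> real" and h :: "'j \<Rightarrow> real"
  assumes "A \<noteq> {}" "B \<noteq> {}" "bdd_below (f ` A)" "bdd_below (h ` B)"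
    and "\<And>a b. a \<in> A \<Longrightarrow> b \<in> B \<Longrightarrow> X \<le> f a + h b"
  shows "X \<le> (INF a\<in>A. f a) + (INF b\<in>B. h b)"
proof -
  have "X - h b \<le> (INF a\<in>A. f a)" if "b \<in> B" for b
    using assms(1) by (rule cINF_greatest) (use assms(5) that in force)
  then have "X - (INF a\<in>A. f a) \<le> h b" if "b \<in> B" for b using that by force
  then have "X - (INF a\<in>A. f a) \<le> (INF b\<in>B. h b)" using assms(2) by (intro cINF_greatest)
  then show ?thesis by simp
qed

lemma le_max_cINF_cINF:
  fixes f :: "'i \<Rightarrow> real" and h :: "'j \<Rightarrow> real"
  assumes "A \<noteq> {}" "B \<noteq> {}" "bdd_below (f ` A)" "bdd_below (h ` B)"
    and "\<And>a b. a \<in> A \<Longrightarrow> b \<in> B \<Longrightarrow> X \<le> max (f a) (h b)"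
  shows "X \<le> max (INF a\<in>A. f a) (INF b\<in>B. h b)"
proof (rule ccontr)
  assume "\<not> ?thesis"
  then have "(INF a\<in>A. f a) < X" "(INF b\<in>B. h b) < X" by auto
  then obtain a b where "a \<in> A" "f a < X" "b \<in> B" "h b < X"
    using cINF_less_iff[OF assms(1,3)] cINF_less_iff[OF assms(2,4)] by metis
  with assms(5)[of a b] show False by auto
qed

lemma sublinear_lattice_functional_INF:
  assumes ne: "C \<noteq> {}" and sub: "\<And>p. p \<in> C \<Longrightarrow> sublinear_lattice_functional p"
    and directed: "\<And>p q. p \<in> C \<Longrightarrow> q \<in> C \<Longrightarrow> \<exists>r\<in>C. (\<forall>x. r x \<le> p x) \<and> (\<forall>x. r x \<le> q x)"
    and bdd: "\<And>x. bdd_below ((\<lambda>p. p x) ` C)"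
  shows "sublinear_lattice_functional (\<lambda>x. INF p\<in>C. p x)" (is "sublinear_lattice_functional ?u")
proof (rule sublinear_lattice_functionalI)
  have u_le: "?u x \<le> p x" if "p \<in> C" for p x
    using bdd that by (rule cINF_lower)
  have u_ge: "X \<le> ?u x" if "\<And>p. p \<in> C \<Longrightarrow> X \<le> p x" for X x
    using ne that by (rule cINF_greatest)
  fix x y
  show "?u (x + y) \<le> ?u x + ?u y"
  proof (rule le_cINF_add_cINF[OF ne ne bdd bdd])
    fix p q assume "p \<in> C" "q \<in> C"
    then obtain r where r: "r \<in> C" "\<forall>x. r x \<le> p x" "\<forall>x. r x \<le> q x" using directed by blast
    have "?u (x + y) \<le> r (x + y)" using u_le r by auto
    also have "\<dots> \<le> r x + r y" using sub[OF r(1)] by (rule sublinear_lattice_functionalD)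
    also have "\<dots> \<le> p x + q y" using r by (intro add_mono) auto
    finally show "?u (x + y) \<le> p x + q y" .
  qed
  show "?u (sup x y) \<le> max (?u x) (?u y)"
  proof (rule le_max_cINF_cINF[OF ne ne bdd bdd])
    fix p q assume "p \<in> C" "q \<in> C"
    then obtain r where r: "r \<in> C" "\<forall>x. r x \<le> p x" "\<forall>x. r x \<le> q x" using directed by blast
    have "?u (sup x y) \<le> r (sup x y)" using u_le r by auto
    also have "\<dots> \<le> max (r x) (r y)" using sub[OF r(1)] by (rule sublinear_lattice_functionalD)
    also have "\<dots> \<le> max (p x) (q y)" using r by (intro max.mono) auto
    finally show "?u (sup x y) \<le> max (p x) (q y)" .
  qed
  show "?u 0 = 0"
  proof -
    obtain p0 where p0: "p0 \<in> C" using ne by auto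
    have "?u 0 \<le> p0 0" using u_le p0 by auto
    moreover have "0 \<le> ?u 0" by (rule u_ge) (use sub sublinear_lattice_functional_0 in force)
    ultimately show ?thesis using sublinear_lattice_functional_0[OF sub[OF p0]] by simp
  qed
  fix c :: real assume c: "0 < c"
  show "?u (c *\<^sub>R x) \<le> c * ?u x"
  proof -
    have "?u (c *\<^sub>R x) / c \<le> ?u x"
    proof (rule u_ge)
      fix p assume p: "p \<in> C"
      have "?u (c *\<^sub>R x) \<le> p (c *\<^sub>R x)" using u_le p by auto
      also have "\<dots> = c * p x" using sub[OF p] c by (intro sublinear_lattice_functionalD) auto
      finally show "?u (c *\<^sub>R x) / c \<le> p x" using c by (simp add: field_simps)
    qed
    then show ?thesis using c by (simp add: field_simps)
  qed
qed

lemma sublinear_lattice_functional_shift: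
  fixes m :: "'a::vector_lattice \<Rightarrow> real" and z :: 'a
  assumes m: "sublinear_lattice_functional m"
  defines "q \<equiv> \<lambda>x. INF t\<in>{0::real..}. m (x + t *\<^sub>R z) - t * m z"
  shows "sublinear_lattice_functional q" and "q x \<le> m x" and "q (- z) \<le> - m z"
proof -
  have ne: "{0::real..} \<noteq> {}" by auto
  have q_eq: "q x = (INF t\<in>{0..}. m (x + t *\<^sub>R z) - t * m z)" for x
    by (simp add: q_def)
  have bdd: "bdd_below ((\<lambda>t. m (x + t *\<^sub>R z) - t * m z) ` {0..})" for x
  proof (rule bdd_belowI)
    fix r assume "r \<in> (\<lambda>t. m (x + t *\<^sub>R z) - t * m z) ` {0..}"
    then obtain t where t: "0 \<le> t" "r = m (x + t *\<^sub>R z) - t * m z" by auto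
    have "m (t *\<^sub>R z) \<le> m (x + t *\<^sub>R z) + m (- x)"
      using sublinear_lattice_functionalD(1)[OF m, of "x + t *\<^sub>R z" "- x"] by simp
    then show "- m (- x) \<le> r" using t sublinear_lattice_functionalD(2)[OF m t(1), of z] by simp
  qed
  have q_le: "q x \<le> m (x + t *\<^sub>R z) - t * m z" if "0 \<le> t" for x t
    unfolding q_def using bdd that by (intro cINF_lower) auto
  have q_ge: "X \<le> q x" if "\<And>t. 0 \<le> t \<Longrightarrow> X \<le> m (x + t *\<^sub>R z) - t * m z" for X x
    unfolding q_def using ne that by (intro cINF_greatest) auto
  show "q x \<le> m x" for x using q_le[of 0 x] by simp
  show "q (- z) \<le> - m z" using q_le[of 1 "- z"] by (simp add: sublinear_lattice_functional_0[OF m])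
  have antimono: "m (x + r *\<^sub>R z) - r * m z \<le> m (x + t *\<^sub>R z) - t * m z"
    if "0 \<le> t" "t \<le> r" for x t r
  proof -
    have "m (x + r *\<^sub>R z) = m ((x + t *\<^sub>R z) + (r - t) *\<^sub>R z)"
      by (simp add: algebra_simps)
    also have "\<dots> \<le> m (x + t *\<^sub>R z) + m ((r - t) *\<^sub>R z)"
      using m by (rule sublinear_lattice_functionalD)
    also have "m ((r - t) *\<^sub>R z) = (r - t) * m z"
      using m that by (intro sublinear_lattice_functionalD) auto
    finally show ?thesis by (simp add: algebra_simps)
  qed
  show "sublinear_lattice_functional q"
  proof (rule sublinear_lattice_functionalI)
    fix x y
    show "q (x + y) \<le> q x + q y"
      unfolding q_eq[of x] q_eq[of y]
    proof (rule le_cINF_add_cINF[OF ne ne bdd bdd])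
      fix t s :: real assume ts: "t \<in> {0..}" "s \<in> {0..}"
      have "q (x + y) \<le> m (x + y + (t + s) *\<^sub>R z) - (t + s) * m z"
        using ts by (intro q_le) auto
      also have "m (x + y + (t + s) *\<^sub>R z) = m ((x + t *\<^sub>R z) + (y + s *\<^sub>R z))"
        by (simp add: algebra_simps)
      also have "\<dots> \<le> m (x + t *\<^sub>R z) + m (y + s *\<^sub>R z)"
        using m by (rule sublinear_lattice_functionalD)
      finally show "q (x + y) \<le> (m (x + t *\<^sub>R z) - t * m z) + (m (y + s *\<^sub>R z) - s * m z)"
        by (simp add: algebra_simps)
    qed
    show "q (sup x y) \<le> max (q x) (q y)"
      unfolding q_eq[of x] q_eq[of y]
    proof (rule le_max_cINF_cINF[OF ne ne bdd bdd])
      fix t s :: real assume ts: "t \<in> {0..}" "s \<in> {0..}"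
      define r where "r = max t s"
      have r: "0 \<le> r" "t \<le> r" "s \<le> r" using ts by (auto simp: r_def)
      have "q (sup x y) \<le> m (sup x y + r *\<^sub>R z) - r * m z" using r by (intro q_le) auto
      also have "sup x y + r *\<^sub>R z = sup (x + r *\<^sub>R z) (y + r *\<^sub>R z)"
        by (rule add_sup_distrib_right)
      also have "m \<dots> - r * m z \<le> max (m (x + r *\<^sub>R z)) (m (y + r *\<^sub>R z)) - r * m z"
        using sublinear_lattice_functionalD(3)[OF m] by simp
      also have "\<dots> = max (m (x + r *\<^sub>R z) - r * m z) (m (y + r *\<^sub>R z) - r * m z)"
        by (simp add: max_diff_distrib_left)
      also have "\<dots> \<le> max (m (x + t *\<^sub>R z) - t * m z) (m (y + s *\<^sub>R z) - s * m z)"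
        using ts r by (intro max.mono antimono) auto
      finally show "q (sup x y) \<le> max (m (x + t *\<^sub>R z) - t * m z) (m (y + s *\<^sub>R z) - s * m z)" .
    qed
    have "q 0 \<le> 0" using q_le[of 0 0] by (simp add: sublinear_lattice_functional_0[OF m])
    moreover have "0 \<le> q 0"
      by (rule q_ge) (simp add: sublinear_lattice_functionalD(2)[OF m])
    ultimately show "q 0 = 0" by simp
    fix c :: real assume c: "0 < c"
    have "q (c *\<^sub>R x) / c \<le> q x"
    proof (rule q_ge)
      fix t :: real assume t: "0 \<le> t"
      have "q (c *\<^sub>R x) \<le> m (c *\<^sub>R x + (c * t) *\<^sub>R z) - (c * t) * m z"
        using t c by (intro q_le) auto
      also have "m (c *\<^sub>R x + (c * t) *\<^sub>R z) = m (c *\<^sub>R (x + t *\<^sub>R z))"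
        by (simp add: algebra_simps)
      also have "\<dots> = c * m (x + t *\<^sub>R z)" using m c by (intro sublinear_lattice_functionalD) auto
      finally show "q (c *\<^sub>R x) / c \<le> m (x + t *\<^sub>R z) - t * m z"
        using c by (simp add: field_simps)
    qed
    then show "q (c *\<^sub>R x) \<le> c * q x" using c by (simp add: field_simps)
  qed
qed

text \<open>By Zorn's lemma there is a minimal sublinear lattice functional below g. The shift of the
  previous lemma does not increase it, so minimality makes it odd, i.e. linear.\<close>

lemma ex_odd_sublinear_lattice_functional_le:
  assumes g: "sublinear_lattice_functional g"
  shows "\<exists>\<phi>. sublinear_lattice_functional \<phi> \<and> (\<forall>x. \<phi> x \<le> g x) \<and> (\<forall>x. \<phi> (- x) = - \<phi> x)"
proof -
  define S where "S = {p. sublinear_lattice_functional p \<and> (\<forall>x. p x \<le> g x)}"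
  define below where "below = (\<lambda>(p::'a \<Rightarrow> real) q. \<forall>x. q x \<le> p x)"
  have po: "partial_order_on S (relation_of below S)"
  proof (rule partial_order_on_relation_ofI)
    show "below p p" for p by (simp add: below_def)
    show "below p r" if "below p q" "below q r" for p q r
      using that unfolding below_def by (meson order.trans)
    show "p = q" if "below p q" "below q p" for p q
      using that unfolding below_def by (meson order.antisym ext)
  qed
  have chain_bound: "\<exists>u\<in>S. \<forall>p\<in>C. below p u" if C: "C \<in> Chains (relation_of below S)" for C
  proof (cases "C = {}")
    case True then show ?thesis using g by (auto simp: S_def)
  next
    case False
    have CS: "C \<subseteq> S" using C by (auto simp: Chains_def relation_of_def)
    define u where "u x = (INF p\<in>C. p x)" for x
    have bdd: "bdd_below ((\<lambda>p. p x) ` C)" for x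
    proof (rule bdd_belowI[of _ "- g (- x)"])
      fix r assume "r \<in> (\<lambda>p. p x) ` C"
      then obtain p where p: "p \<in> C" "r = p x" by auto
      then have "- g (- x) \<le> - p (- x)" using CS by (auto simp: S_def)
      also have "\<dots> \<le> p x" using p CS by (intro sublinear_lattice_functional_neg_le) (auto simp: S_def)
      finally show "- g (- x) \<le> r" using p by simp
    qed
    have u_sub: "sublinear_lattice_functional u"
      unfolding u_def
    proof (rule sublinear_lattice_functional_INF[OF False _ _ bdd])
      show "sublinear_lattice_functional p" if "p \<in> C" for p using CS that by (auto simp: S_def)
      fix p q assume "p \<in> C" "q \<in> C"
      then have "(p, q) \<in> relation_of below S \<or> (q, p) \<in> relation_of below S"
        using C unfolding Chains_def by auto
      then show "\<exists>r\<in>C. (\<forall>x. r x \<le> p x) \<and> (\<forall>x. r x \<le> q x)"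
        using \<open>p \<in> C\<close> \<open>q \<in> C\<close> unfolding relation_of_def below_def by auto
    qed
    have u_le: "u x \<le> p x" if "p \<in> C" for p x
      unfolding u_def using bdd that by (rule cINF_lower)
    have u_g: "u x \<le> g x" for x
    proof -
      obtain p where p: "p \<in> C" using False by auto
      then have "p x \<le> g x" using CS by (auto simp: S_def)
      then show ?thesis using u_le[OF p, of x] by simp
    qed
    have "u \<in> S" using u_sub u_g by (simp add: S_def)
    moreover have "\<forall>p\<in>C. below p u" using u_le by (simp add: below_def)
    ultimately show ?thesis by blast
  qed
  from predicate_Zorn[OF po chain_bound]
  obtain m where m: "m \<in> S" "\<And>p. p \<in> S \<Longrightarrow> below m p \<Longrightarrow> p = m"
    by blast
  have msub: "sublinear_lattice_functional m" and mg: "\<And>x. m x \<le> g x"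
    using m(1) by (auto simp: S_def)
  have "m (- z) = - m z" for z
  proof -
    define q where "q x = (INF t\<in>{0::real..}. m (x + t *\<^sub>R z) - t * m z)" for x
    have q: "sublinear_lattice_functional q" "\<And>x. q x \<le> m x" "q (- z) \<le> - m z"
      unfolding q_def by (rule sublinear_lattice_functional_shift[OF msub])+
    have "q \<in> S" using q(1,2) mg by (simp add: S_def) (meson order.trans)
    moreover have "below m q" using q(2) by (simp add: below_def)
    ultimately have "q = m" by (rule m(2))
    then have "m (- z) \<le> - m z" using q(3) by simp
    moreover have "- m (- z) \<le> m z" using msub by (rule sublinear_lattice_functional_neg_le)
    ultimately show ?thesis by simp
  qed
  then show ?thesis using msub mg by blast
qed

definition lattice_hom_functional :: "('a::vector_lattice \<Rightarrow> real) \<Rightarrow> bool" where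
  "lattice_hom_functional \<phi> \<longleftrightarrow> linear \<phi> \<and> (\<forall>x y. \<phi> (sup x y) = max (\<phi> x) (\<phi> y))"

lemma lattice_hom_functional_mono:
  assumes "lattice_hom_functional \<phi>" "x \<le> y"
  shows "\<phi> x \<le> \<phi> y"
proof -
  have "\<phi> y = max (\<phi> x) (\<phi> y)"
    using assms unfolding lattice_hom_functional_def by (metis sup.absorb2)
  then show ?thesis by simp
qed

lemma ex_lattice_hom_functional_le:
  assumes g: "sublinear_lattice_functional g" and g_nonpos: "\<And>w. 0 \<le> w \<Longrightarrow> g (- w) \<le> 0"
  shows "\<exists>\<phi>. lattice_hom_functional \<phi> \<and> (\<forall>x. \<phi> x \<le> g x)"
proof -
  obtain \<phi> where \<phi>: "sublinear_lattice_functional \<phi>" "\<And>x. \<phi> x \<le> g x" "\<And>x. \<phi> (- x) = - \<phi> x"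
    using ex_odd_sublinear_lattice_functional_le[OF g] by blast
  have add: "\<phi> (x + y) = \<phi> x + \<phi> y" for x y
  proof -
    have "- \<phi> (x + y) = \<phi> (- x + - y)" using \<phi>(3)[of "x + y"] by simp
    also have "\<dots> \<le> \<phi> (- x) + \<phi> (- y)" using \<phi>(1) by (rule sublinear_lattice_functionalD)
    finally have "\<phi> x + \<phi> y \<le> \<phi> (x + y)" by (simp add: \<phi>(3))
    then show ?thesis using sublinear_lattice_functionalD(1)[OF \<phi>(1)] by (simp add: order.antisym)
  qed
  have scale: "\<phi> (c *\<^sub>R x) = c * \<phi> x" for c x
  proof (cases "0 \<le> c")
    case True show ?thesis using \<phi>(1) True by (rule sublinear_lattice_functionalD)
  next
    case False
    have "\<phi> (c *\<^sub>R x) = \<phi> ((- c) *\<^sub>R (- x))" by simp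
    also have "\<dots> = (- c) * \<phi> (- x)" using False \<phi>(1) by (intro sublinear_lattice_functionalD) auto
    finally show ?thesis using \<phi>(3) by simp
  qed
  have pos: "0 \<le> \<phi> w" if "0 \<le> w" for w
    using \<phi>(2)[of "- w"] g_nonpos[OF that] \<phi>(3)[of w] by simp
  have "\<phi> (sup x y) = max (\<phi> x) (\<phi> y)" for x y
  proof -
    have "0 \<le> \<phi> (sup x y - x)" "0 \<le> \<phi> (sup x y - y)" by (intro pos; simp)+
    then have "max (\<phi> x) (\<phi> y) \<le> \<phi> (sup x y)"
      using add[of "sup x y - x" x] add[of "sup x y - y" y] by simp
    then show ?thesis using sublinear_lattice_functionalD(3)[OF \<phi>(1)] by (simp add: order.antisym)
  qed
  moreover have "linear \<phi>" by (rule linearI) (simp_all add: add scale)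
  ultimately show ?thesis using \<phi>(2) unfolding lattice_hom_functional_def by blast
qed

section \<open>Banach lattices\<close>

lemma lmod_nonneg: "0 \<le> lmod x"
proof -
  have "x + - x \<le> lmod x + lmod x" unfolding lmod_def by (intro add_mono) auto
  then show ?thesis by simp
qed

lemma le_lmod: "x \<le> lmod x" and neg_le_lmod: "- x \<le> lmod x"
  unfolding lmod_def by auto

lemma lmod_eq_self: "0 \<le> x \<Longrightarrow> lmod x = x"
  unfolding lmod_def by (simp add: sup.absorb1 minus_le_self_iff)

lemma norm_mono_nonneg: "0 \<le> y \<Longrightarrow> y \<le> x \<Longrightarrow> norm y \<le> norm (x::'a::banach_lattice)"
  using lattice_norm[of y x] lmod_eq_self[of y] lmod_eq_self[of x] unfolding lmod_def by auto

lemma norm_lmod: "norm (lmod x) = norm x"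
  using lattice_norm[of "lmod x" x] lattice_norm[of x "lmod x"] lmod_eq_self[OF lmod_nonneg, of x]
  unfolding lmod_def by (metis order.refl order.antisym)

lemma norm_pprt_le: "norm (pprt x) \<le> norm (x::'a::banach_lattice)"
proof -
  have "pprt x \<le> lmod x" unfolding pprt_def using le_lmod lmod_nonneg by (rule sup_least)
  then have "norm (pprt x) \<le> norm (lmod x)" by (intro norm_mono_nonneg) simp_all
  then show ?thesis by (simp add: norm_lmod)
qed

lemma norm_pprt_mono: "a \<le> b \<Longrightarrow> norm (pprt a) \<le> norm (pprt (b::'a::banach_lattice))"
  by (intro norm_mono_nonneg pprt_mono) simp_all

lemma norm_pprt_add_le: "norm (pprt (a + b)) \<le> norm (pprt a) + norm (pprt (b::'a::banach_lattice))"
proof -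
  have "pprt (a + b) \<le> pprt a + pprt b"
    unfolding pprt_def by (intro sup_least add_mono add_nonneg_nonneg) auto
  then have "norm (pprt (a + b)) \<le> norm (pprt a + pprt b)" by (intro norm_mono_nonneg) simp_all
  then show ?thesis using norm_triangle_ineq order_trans by blast
qed

lemma norm_le_norm_pprt_add: "0 \<le> d \<Longrightarrow> norm d \<le> norm (pprt (x + d)) + norm (x::'a::banach_lattice)"
proof -
  assume d: "0 \<le> d"
  have "d \<le> pprt (x + d) + pprt (- x)"
    using add_mono[of "x + d" "pprt (x + d)" "- x" "pprt (- x)"] by (simp add: pprt_def)
  then have "norm d \<le> norm (pprt (x + d) + pprt (- x))" using d by (rule norm_mono_nonneg[rotated])
  also have "\<dots> \<le> norm (pprt (x + d)) + norm (pprt (- x))" by (rule norm_triangle_ineq)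
  also have "norm (pprt (- x)) \<le> norm x" using norm_pprt_le[of "- x"] by simp
  finally show ?thesis by simp
qed

lemma sublinear_lattice_functional_norm_pprt:
  "sublinear_lattice_functional (\<lambda>x::'a::am_space. norm (pprt x))"
proof (rule sublinear_lattice_functionalI)
  show "norm (pprt (sup x y)) \<le> max (norm (pprt x)) (norm (pprt y))" for x y :: 'a
  proof -
    have "pprt (sup x y) = sup (pprt x) (pprt y)" by (simp add: pprt_def sup_aci)
    then show ?thesis by (simp add: am_norm)
  qed
qed (simp_all add: norm_pprt_add_le pprt_scaleR)

lemma lattice_hom_functional_lmod: "lattice_hom_functional \<phi> \<Longrightarrow> \<phi> (lmod x) = \<bar>\<phi> x\<bar>"
  unfolding lattice_hom_functional_def lmod_def by (simp add: linear_neg)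

lemma bounded_linear_lattice_hom_functional:
  "lattice_hom_functional \<phi> \<Longrightarrow> (\<And>x. \<bar>\<phi> x\<bar> \<le> norm x) \<Longrightarrow> bounded_linear \<phi>"
  unfolding lattice_hom_functional_def
  by (intro bounded_linear_intro[where K = 1]) (auto simp: linear_add linear_scale)

section \<open>Lattice homomorphisms on AM-spaces\<close>

text \<open>A linear functional below this gauge is dominated by norm (pprt x) (take t = 0) and is at
  least the infimum of the norms of the D k on each D j (take x = - D j and t = 1).\<close>

definition tail_gauge :: "(nat \<Rightarrow> 'a::banach_lattice) \<Rightarrow> 'a \<Rightarrow> real" where
  "tail_gauge D x =
     (INF (j, t)\<in>UNIV \<times> {0::real..}. norm (pprt (x + t *\<^sub>R D j)) - t * (INF k. norm (D k)))"

context
  fixes D :: "nat \<Rightarrow> 'a::am_space"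
  assumes D_nonneg: "\<And>j. 0 \<le> D j" and D_decreasing: "\<And>j. D (Suc j) \<le> D j"
begin

private abbreviation (input) "m \<equiv> INF k. norm (D k)"

private lemma m_le_norm: "m \<le> norm (D j)"
  by (rule cINF_lower) (auto intro: bdd_belowI[of _ 0])

private lemma norm_pprt_add_D_antimono:
  assumes "j \<le> k" "0 \<le> t"
  shows "norm (pprt (x + t *\<^sub>R D k)) \<le> norm (pprt (x + t *\<^sub>R D j))"
  using lift_Suc_antimono_le[of D, OF D_decreasing assms(1)] assms(2)
  by (intro norm_pprt_mono add_left_mono scaleR_left_mono)

private lemma bdd_below_tail_terms:
  "bdd_below ((\<lambda>(j, t). norm (pprt (x + t *\<^sub>R D j)) - t * m) ` (UNIV \<times> {0..}))"
proof (rule bdd_belowI[of _ "- norm x"], clarsimp)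
  fix j and t :: real assume t: "0 \<le> t"
  have "t * m \<le> norm (t *\<^sub>R D j)" using t m_le_norm by (simp add: mult_left_mono)
  also have "\<dots> \<le> norm (pprt (x + t *\<^sub>R D j)) + norm x"
    using D_nonneg t by (intro norm_le_norm_pprt_add scaleR_nonneg_nonneg)
  finally show "- norm x \<le> norm (pprt (x + t *\<^sub>R D j)) - t * m" by simp
qed

lemma tail_gauge_le: "0 \<le> t \<Longrightarrow> tail_gauge D x \<le> norm (pprt (x + t *\<^sub>R D j)) - t * m"
  unfolding tail_gauge_def using bdd_below_tail_terms by (rule cINF_lower2) auto

lemma le_tail_gauge:
  "(\<And>j t. 0 \<le> t \<Longrightarrow> X \<le> norm (pprt (x + t *\<^sub>R D j)) - t * m) \<Longrightarrow> X \<le> tail_gauge D x"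
  unfolding tail_gauge_def by (rule cINF_greatest) auto

private lemma tail_gauge_add_le: "tail_gauge D (x + y) \<le> tail_gauge D x + tail_gauge D y"
  unfolding tail_gauge_def[of D x] tail_gauge_def[of D y]
proof (rule le_cINF_add_cINF[OF _ _ bdd_below_tail_terms bdd_below_tail_terms], simp_all, clarsimp)
  fix j k :: nat and t s :: real assume ts: "0 \<le> t" "0 \<le> s"
  define l where "l = max j k"
  have "tail_gauge D (x + y) \<le> norm (pprt ((x + t *\<^sub>R D l) + (y + s *\<^sub>R D l))) - (t + s) * m"
    using tail_gauge_le[of "t + s" "x + y" l] ts by (simp add: algebra_simps)
  also have "\<dots> \<le> (norm (pprt (x + t *\<^sub>R D l)) - t * m) + (norm (pprt (y + s *\<^sub>R D l)) - s * m)"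
    using norm_pprt_add_le[of "x + t *\<^sub>R D l" "y + s *\<^sub>R D l"] by (simp add: algebra_simps)
  also have "\<dots> \<le> (norm (pprt (x + t *\<^sub>R D j)) - t * m) + (norm (pprt (y + s *\<^sub>R D k)) - s * m)"
    using ts by (intro add_mono diff_right_mono norm_pprt_add_D_antimono) (auto simp: l_def)
  finally show "tail_gauge D (x + y)
    \<le> norm (pprt (x + t *\<^sub>R D j)) - t * m + (norm (pprt (y + s *\<^sub>R D k)) - s * m)" .
qed

text \<open>Both arguments are moved to a common late index l and a common coefficient r; raising a
  coefficient t to r costs at most (r - t) * (norm (D l) - m), which is small since the norms of the
  D l decrease to m.\<close>

private lemma tail_gauge_sup_le: "tail_gauge D (sup x y) \<le> max (tail_gauge D x) (tail_gauge D y)"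
  unfolding tail_gauge_def[of D x] tail_gauge_def[of D y]
proof (rule le_max_cINF_cINF[OF _ _ bdd_below_tail_terms bdd_below_tail_terms], simp_all, clarsimp)
  fix j k :: nat and t s :: real assume ts: "0 \<le> t" "0 \<le> s"
  define r where "r = max t s"
  have r: "0 \<le> r" "t \<le> r" "s \<le> r" using ts by (auto simp: r_def)
  show "tail_gauge D (sup x y)
    \<le> max (norm (pprt (x + t *\<^sub>R D j)) - t * m) (norm (pprt (y + s *\<^sub>R D k)) - s * m)"
  proof (rule field_le_epsilon)
    fix e :: real assume e: "0 < e"
    have "m < m + e / (r + 1)" using e r by simp
    then obtain L where L: "norm (D L) < m + e / (r + 1)"
      by (subst (asm) cINF_less_iff) (auto intro: bdd_belowI[of _ 0])
    define l where "l = max (max j k) L"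
    have "norm (D l) \<le> norm (D L)"
      using D_nonneg lift_Suc_antimono_le[of D, OF D_decreasing, of L l]
      by (intro norm_mono_nonneg) (simp_all add: l_def)
    with L have Dl: "norm (D l) - m \<le> e / (r + 1)" by simp
    have shift: "norm (pprt (z + r *\<^sub>R D l)) - r * m \<le> norm (pprt (z + t' *\<^sub>R D l)) - t' * m + e"
      if t': "0 \<le> t'" "t' \<le> r" for z t'
    proof -
      have "norm (pprt ((z + t' *\<^sub>R D l) + (r - t') *\<^sub>R D l))
          \<le> norm (pprt (z + t' *\<^sub>R D l)) + norm (pprt ((r - t') *\<^sub>R D l))"
        by (rule norm_pprt_add_le)
      also have "norm (pprt ((r - t') *\<^sub>R D l)) = (r - t') * norm (D l)"
        using t' D_nonneg[of l] by (simp add: scaleR_nonneg_nonneg)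
      finally have "norm (pprt (z + r *\<^sub>R D l)) - r * m
          \<le> norm (pprt (z + t' *\<^sub>R D l)) - t' * m + (r - t') * (norm (D l) - m)"
        by (simp add: algebra_simps)
      also have "(r - t') * (norm (D l) - m) \<le> (r + 1) * (e / (r + 1))"
        using t' r Dl m_le_norm[of l] by (intro mult_mono) auto
      finally show ?thesis using r by simp
    qed
    have "tail_gauge D (sup x y) \<le> norm (pprt (sup (x + r *\<^sub>R D l) (y + r *\<^sub>R D l))) - r * m"
      using tail_gauge_le[OF r(1), of "sup x y" l] by (simp add: add_sup_distrib_right)
    also have "\<dots> \<le> max (norm (pprt (x + r *\<^sub>R D l)) - r * m) (norm (pprt (y + r *\<^sub>R D l)) - r * m)"
      using sublinear_lattice_functionalD(3)[OF sublinear_lattice_functional_norm_pprt,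
          of "x + r *\<^sub>R D l" "y + r *\<^sub>R D l"]
      by (simp flip: max_diff_distrib_left)
    also have "\<dots> \<le> max (norm (pprt (x + t *\<^sub>R D l)) - t * m + e) (norm (pprt (y + s *\<^sub>R D l)) - s * m + e)"
      using r ts by (intro max.mono shift) auto
    also have "\<dots> \<le> max (norm (pprt (x + t *\<^sub>R D j)) - t * m + e) (norm (pprt (y + s *\<^sub>R D k)) - s * m + e)"
      using ts
      by (intro max.mono add_right_mono diff_right_mono norm_pprt_add_D_antimono) (auto simp: l_def)
    finally show "tail_gauge D (sup x y)
      \<le> max (norm (pprt (x + t *\<^sub>R D j)) - t * m) (norm (pprt (y + s *\<^sub>R D k)) - s * m) + e"
      by (simp add: max_add_distrib_left)
  qed
qed

lemma sublinear_lattice_functional_tail_gauge: "sublinear_lattice_functional (tail_gauge D)"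
proof (rule sublinear_lattice_functionalI[OF tail_gauge_add_le _ _ tail_gauge_sup_le])
  have "tail_gauge D 0 \<le> 0" using tail_gauge_le[of 0 0 0] by simp
  moreover have "0 \<le> tail_gauge D 0"
  proof (rule le_tail_gauge)
    fix j and t :: real assume t: "0 \<le> t"
    have "norm (pprt (t *\<^sub>R D j)) = t * norm (D j)"
      using t D_nonneg[of j] by (simp add: scaleR_nonneg_nonneg)
    then show "0 \<le> norm (pprt (0 + t *\<^sub>R D j)) - t * m"
      using t m_le_norm[of j] by (simp add: mult_left_mono)
  qed
  ultimately show "tail_gauge D 0 = 0" by simp
  fix c :: real and x assume c: "0 < c"
  have "tail_gauge D (c *\<^sub>R x) / c \<le> tail_gauge D x"
  proof (rule le_tail_gauge)
    fix j and t :: real assume t: "0 \<le> t"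
    have "tail_gauge D (c *\<^sub>R x) \<le> norm (pprt (c *\<^sub>R x + (c * t) *\<^sub>R D j)) - (c * t) * m"
      using tail_gauge_le[of "c * t" "c *\<^sub>R x" j] t c by simp
    also have "c *\<^sub>R x + (c * t) *\<^sub>R D j = c *\<^sub>R (x + t *\<^sub>R D j)"
      by (simp add: algebra_simps)
    also have "norm (pprt (c *\<^sub>R (x + t *\<^sub>R D j))) - (c * t) * m
        = c * (norm (pprt (x + t *\<^sub>R D j)) - t * m)"
      using c by (subst pprt_scaleR) (simp_all add: algebra_simps)
    finally show "tail_gauge D (c *\<^sub>R x) / c \<le> norm (pprt (x + t *\<^sub>R D j)) - t * m"
      using c by (simp add: field_simps)
  qed
  then show "tail_gauge D (c *\<^sub>R x) \<le> c * tail_gauge D x" using c by (simp add: field_simps)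
qed

lemma ex_lattice_hom_functional_ge_on_decreasing:
  assumes "\<And>j. \<eta> \<le> norm (D j)"
  shows "\<exists>\<phi>. lattice_hom_functional \<phi> \<and> (\<forall>x. \<bar>\<phi> x\<bar> \<le> norm x) \<and> (\<forall>j. \<eta> \<le> \<phi> (D j))"
proof -
  have gauge_le: "tail_gauge D x \<le> norm (pprt x)" for x using tail_gauge_le[of 0 x 0] by simp
  obtain \<phi> where \<phi>: "lattice_hom_functional \<phi>" "\<And>x. \<phi> x \<le> tail_gauge D x"
  proof (rule exE[OF ex_lattice_hom_functional_le[OF sublinear_lattice_functional_tail_gauge]])
    show "tail_gauge D (- w) \<le> 0" if "0 \<le> w" for w using gauge_le[of "- w"] that by simp
  qed blast
  have \<phi>_neg: "\<phi> (- x) = - \<phi> x" for x using \<phi>(1) by (simp add: lattice_hom_functional_def linear_neg)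
  have "\<bar>\<phi> x\<bar> \<le> norm x" for x
    using \<phi>(2)[of x] \<phi>(2)[of "- x"] gauge_le[of x] gauge_le[of "- x"]
      norm_pprt_le[of x] norm_pprt_le[of "- x"]
    by (simp add: \<phi>_neg)
  moreover have "\<eta> \<le> \<phi> (D j)" for j
  proof -
    have "\<phi> (- D j) \<le> - m" using \<phi>(2)[of "- D j"] tail_gauge_le[of 1 "- D j" j] by simp
    moreover have "\<eta> \<le> m" using assms by (intro cINF_greatest) auto
    ultimately show ?thesis by (simp add: \<phi>_neg)
  qed
  ultimately show ?thesis using \<phi>(1) by blast
qed

end

lemma ex_norming_lattice_hom_functional:
  fixes x :: "'a::am_space"
  shows "\<exists>\<phi>. lattice_hom_functional \<phi> \<and> (\<forall>y. \<bar>\<phi> y\<bar> \<le> norm y) \<and> \<bar>\<phi> x\<bar> = norm x"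
proof -
  obtain \<phi> where \<phi>: "lattice_hom_functional \<phi>" "\<And>y. \<bar>\<phi> y\<bar> \<le> norm y" "norm x \<le> \<phi> (lmod x)"
    using ex_lattice_hom_functional_ge_on_decreasing[of "\<lambda>_. lmod x" "norm x"]
    by (auto simp: lmod_nonneg norm_lmod)
  then show ?thesis by (metis lattice_hom_functional_lmod order.antisym)
qed

section \<open>Positive functionals\<close>

definition positive_functional :: "('a::banach_lattice \<Rightarrow> real) \<Rightarrow> bool" where
  "positive_functional P \<longleftrightarrow> bounded_linear P \<and> (\<forall>x. 0 \<le> x \<longrightarrow> 0 \<le> P x)"

lemma positive_functional_mono:
  assumes P: "positive_functional P" and "x \<le> y"
  shows "P x \<le> P y"
proof -
  have "0 \<le> P (y - x)" using assms unfolding positive_functional_def by simp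
  also have "P (y - x) = P y - P x"
    using P unfolding positive_functional_def by (simp add: linear_diff bounded_linear.linear)
  finally show ?thesis by simp
qed

lemma positive_functional_abs_le:
  assumes P: "positive_functional P"
  shows "\<bar>P x\<bar> \<le> P (lmod x)"
proof -
  have "P (- x) = - P x"
    using P unfolding positive_functional_def by (simp add: linear_neg bounded_linear.linear)
  then show ?thesis
    using positive_functional_mono[OF P le_lmod[of x]] positive_functional_mono[OF P neg_le_lmod[of x]]
    by (simp add: abs_le_iff)
qed

text \<open>The extension is x \<mapsto> p (pprt x) - p (pprt (- x)).\<close>

lemma positive_functional_extend:
  fixes p :: "'a::banach_lattice \<Rightarrow> real"
  assumes add: "\<And>a b. 0 \<le> a \<Longrightarrow> 0 \<le> b \<Longrightarrow> p (a + b) = p a + p b"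
    and scale: "\<And>c a. 0 \<le> c \<Longrightarrow> 0 \<le> a \<Longrightarrow> p (c *\<^sub>R a) = c * p a"
    and nonneg: "\<And>a. 0 \<le> a \<Longrightarrow> 0 \<le> p a"
    and bound: "\<And>a. 0 \<le> a \<Longrightarrow> p a \<le> K * norm a"
  shows "\<exists>P. positive_functional P \<and> (\<forall>a. 0 \<le> a \<longrightarrow> P a = p a)"
proof -
  define P where "P x = p (pprt x) - p (pprt (- x))" for x
  have P_diff: "P x = p a - p b" if "0 \<le> a" "0 \<le> b" "x = a - b" for x a b
  proof -
    have "pprt x + b = a + pprt (- x)"
      using that pprt_minus_pprt_neg[of x] by (simp add: algebra_simps)
    then have "p (pprt x) + p b = p a + p (pprt (- x))" using that by (metis add zero_le_pprt)
    then show ?thesis by (simp add: P_def)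
  qed
  have "P (x + y) = P x + P y" for x y
  proof -
    have "x + y = (pprt x + pprt y) - (pprt (- x) + pprt (- y))"
      by (metis pprt_minus_pprt_neg add_diff_add)
    then have "P (x + y) = p (pprt x + pprt y) - p (pprt (- x) + pprt (- y))"
      by (intro P_diff add_nonneg_nonneg zero_le_pprt)
    then show ?thesis by (simp add: add P_def)
  qed
  moreover have "P (c *\<^sub>R x) = c * P x" for c x
  proof (cases "0 \<le> c")
    case True
    have "c *\<^sub>R x = c *\<^sub>R pprt x - c *\<^sub>R pprt (- x)"
      by (metis pprt_minus_pprt_neg scaleR_diff_right)
    then have "P (c *\<^sub>R x) = p (c *\<^sub>R pprt x) - p (c *\<^sub>R pprt (- x))"
      using True by (intro P_diff scaleR_nonneg_nonneg zero_le_pprt)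
    then show ?thesis using True by (simp add: scale P_def algebra_simps)
  next
    case False
    have "c *\<^sub>R x = (- c) *\<^sub>R pprt (- x) - (- c) *\<^sub>R pprt x"
      by (metis pprt_minus_pprt_neg scaleR_diff_right minus_diff_eq scaleR_minus_left scaleR_minus_right)
    then have "P (c *\<^sub>R x) = p ((- c) *\<^sub>R pprt (- x)) - p ((- c) *\<^sub>R pprt x)"
      using False by (intro P_diff scaleR_nonneg_nonneg zero_le_pprt) simp_all
    moreover have "0 \<le> - c" using False by simp
    ultimately show ?thesis
      using scale[OF \<open>0 \<le> - c\<close> zero_le_pprt, of "- x"] scale[OF \<open>0 \<le> - c\<close> zero_le_pprt, of x]
      by (simp add: P_def algebra_simps)
  qed
  moreover have "norm (P x) \<le> norm x * (2 * max K 0)" for x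
  proof -
    have "norm (P x) \<le> p (pprt x) + p (pprt (- x))"
      using nonneg[of "pprt x"] nonneg[of "pprt (- x)"] by (auto simp: P_def)
    also have "\<dots> \<le> K * norm (pprt x) + K * norm (pprt (- x))" by (intro add_mono bound) simp_all
    also have "\<dots> \<le> max K 0 * norm x + max K 0 * norm (- x)"
      by (intro add_mono mult_mono norm_pprt_le) auto
    finally show ?thesis by (simp add: algebra_simps)
  qed
  ultimately have "bounded_linear P" by (intro bounded_linear_intro) auto
  moreover have "P a = p a" if "0 \<le> a" for a using P_diff[of a 0 a] that add[of 0 0] by simp
  ultimately show ?thesis using nonneg unfolding positive_functional_def by auto
qed

text \<open>The positive part of f is x \<mapsto> SUP {f y | 0 \<le> y \<le> x} on the positive cone; the Riesz
  decomposition property makes it additive there.\<close>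

lemma positive_functional_decomposition:
  fixes f :: "'a::banach_lattice \<Rightarrow> real"
  assumes f: "bounded_linear f"
  shows "\<exists>P Q. positive_functional P \<and> positive_functional Q \<and> (\<forall>x. f x = P x - Q x)"
proof -
  interpret f: bounded_linear f by (rule f)
  obtain K where K: "K > 0" "\<And>x. norm (f x) \<le> norm x * K" using f.pos_bounded by blast
  define p where "p x = (SUP y\<in>{y. 0 \<le> y \<and> y \<le> x}. f y)" for x
  have f_le: "f y \<le> K * norm x" if "0 \<le> y" "y \<le> x" for x y
  proof -
    have "f y \<le> norm y * K" using K(2)[of y] by simp
    also have "\<dots> \<le> norm x * K" using norm_mono_nonneg[OF that] K(1) by (simp add: mult_right_mono)
    finally show ?thesis by (simp add: mult.commute)
  qed
  have p_ge: "f y \<le> p x" if "0 \<le> y" "y \<le> x" for x y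
    unfolding p_def using that f_le by (intro cSUP_upper bdd_aboveI2[of _ _ "K * norm x"]) auto
  have p_le: "p x \<le> X" if "0 \<le> x" "\<And>y. 0 \<le> y \<Longrightarrow> y \<le> x \<Longrightarrow> f y \<le> X" for x X
    unfolding p_def using that by (intro cSUP_least) auto
  have p_add: "p (a + b) = p a + p b" if a: "0 \<le> a" and b: "0 \<le> b" for a b
  proof (rule order.antisym)
    show "p (a + b) \<le> p a + p b"
    proof (rule p_le)
      fix y assume "0 \<le> y" "y \<le> a + b"
      then obtain y1 y2 where "y = y1 + y2" "0 \<le> y1" "y1 \<le> a" "0 \<le> y2" "y2 \<le> b"
        using riesz_decomposition a b by blast
      then show "f y \<le> p a + p b" by (simp add: f.add add_mono p_ge)
    qed (use a b in simp)
    have "p a \<le> p (a + b) - p b"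
    proof (rule p_le[OF a])
      fix y1 assume y1: "0 \<le> y1" "y1 \<le> a"
      have "p b \<le> p (a + b) - f y1"
      proof (rule p_le[OF b])
        fix y2 assume "0 \<le> y2" "y2 \<le> b"
        then have "f (y1 + y2) \<le> p (a + b)" using y1 by (intro p_ge add_mono) simp_all
        then show "f y2 \<le> p (a + b) - f y1" by (simp add: f.add)
      qed
      then show "f y1 \<le> p (a + b) - p b" by simp
    qed
    then show "p a + p b \<le> p (a + b)" by simp
  qed
  have p_scale: "p (c *\<^sub>R x) \<le> c * p x" if c: "0 < c" and x: "0 \<le> x" for c x
  proof (rule p_le)
    show "0 \<le> c *\<^sub>R x" using c x by (simp add: scaleR_nonneg_nonneg)
    fix y assume y: "0 \<le> y" "y \<le> c *\<^sub>R x"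
    have "inverse c *\<^sub>R y \<le> inverse c *\<^sub>R (c *\<^sub>R x)" using y c by (intro scaleR_left_mono) auto
    then have "f (inverse c *\<^sub>R y) \<le> p x" using y c by (intro p_ge scaleR_nonneg_nonneg) simp_all
    then show "f y \<le> c * p x" using c by (simp add: f.scaleR field_simps)
  qed
  have p_hom: "p (c *\<^sub>R x) = c * p x" if c: "0 \<le> c" and x: "0 \<le> x" for c x
  proof (cases "c = 0")
    case True
    have "p 0 \<le> 0" by (rule p_le) (auto simp: f.zero dest: order.antisym)
    moreover have "0 \<le> p 0" using p_ge[of 0 0] by (simp add: f.zero)
    ultimately show ?thesis using True by simp
  next
    case False
    with c have c': "0 < c" by simp
    have "p x = p (inverse c *\<^sub>R (c *\<^sub>R x))" using c' by simp
    also have "\<dots> \<le> inverse c * p (c *\<^sub>R x)" using c' x by (intro p_scale scaleR_nonneg_nonneg) simp_all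
    finally have "c * p x \<le> p (c *\<^sub>R x)" using c' by (simp add: field_simps)
    with p_scale[OF c' x] show ?thesis by simp
  qed
  have p_nonneg: "0 \<le> p x" if "0 \<le> x" for x using p_ge[of 0 x] that by (simp add: f.zero)
  have "p x \<le> K * norm x" if "0 \<le> x" for x using that f_le by (intro p_le) auto
  then obtain P where P: "positive_functional P" "\<And>a. 0 \<le> a \<Longrightarrow> P a = p a"
    using positive_functional_extend[of p K] p_add p_hom p_nonneg by blast
  have "positive_functional (\<lambda>x. P x - f x)"
    using P f p_ge[of x x for x] unfolding positive_functional_def by (auto intro: bounded_linear_sub)
  then show ?thesis using P(1) by (intro exI[of _ P] exI[of _ "\<lambda>x. P x - f x"]) auto
qed

lemma weakly_convergent_to_0_iff_positive:
  fixes x :: "nat \<Rightarrow> 'a::banach_lattice"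
  shows "weakly_convergent_to x 0 \<longleftrightarrow>
    (\<forall>P. positive_functional P \<longrightarrow> (\<lambda>n. P (x n)) \<longlonglongrightarrow> 0)"
proof
  assume "weakly_convergent_to x 0"
  then show "\<forall>P. positive_functional P \<longrightarrow> (\<lambda>n. P (x n)) \<longlonglongrightarrow> 0"
    unfolding weakly_convergent_to_def positive_functional_def
    by (metis bounded_linear.linear linear_0)
next
  assume pos: "\<forall>P. positive_functional P \<longrightarrow> (\<lambda>n. P (x n)) \<longlonglongrightarrow> 0"
  show "weakly_convergent_to x 0"
    unfolding weakly_convergent_to_def
  proof (intro allI impI)
    fix f :: "'a \<Rightarrow> real" assume f: "bounded_linear f"
    obtain P Q where PQ: "positive_functional P" "positive_functional Q" "\<And>x. f x = P x - Q x"
      using positive_functional_decomposition[OF f] by blast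
    have "(\<lambda>n. P (x n) - Q (x n)) \<longlonglongrightarrow> 0 - 0" using pos PQ by (intro tendsto_diff) auto
    then have "(\<lambda>n. f (x n)) \<longlonglongrightarrow> 0" by (simp add: PQ(3))
    moreover have "f 0 = 0" by (rule linear_0[OF bounded_linear.linear[OF f]])
    ultimately show "(\<lambda>n. f (x n)) \<longlonglongrightarrow> f 0" by simp
  qed
qed

lemma uaw_convergent_to_0_iff_positive:
  "uaw_convergent_to x 0 \<longleftrightarrow>
    (\<forall>u P. 0 \<le> u \<longrightarrow> positive_functional P \<longrightarrow> (\<lambda>n. P (inf (lmod (x n)) u)) \<longlonglongrightarrow> 0)"
  unfolding uaw_convergent_to_def weakly_convergent_to_0_iff_positive by auto

section \<open>Weak versus uaw convergence in AM-spaces\<close>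

text \<open>Take w almost maximising P on the positive part of the M-ball. In an AM-space that set is
  closed under sup, so P z - P (inf z w) = P (sup z w) - P w is at most the gap to the supremum.\<close>

lemma positive_functional_ex_inf_le:
  fixes P :: "'a::am_space \<Rightarrow> real"
  assumes P: "positive_functional P" and e: "0 < e"
  shows "\<exists>w. 0 \<le> w \<and> (\<forall>z. 0 \<le> z \<longrightarrow> norm z \<le> M \<longrightarrow> P z \<le> P (inf z w) + e)"
proof (cases "0 \<le> M")
  case M: True
  interpret P: bounded_linear P using P by (simp add: positive_functional_def)
  obtain K where K: "0 < K" "\<And>v. norm (P v) \<le> norm v * K" using P.pos_bounded by blast
  define B where "B = {v::'a. 0 \<le> v \<and> norm v \<le> M}"
  have "0 \<in> B" using M by (simp add: B_def)
  have bdd: "bdd_above (P ` B)"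
  proof (rule bdd_aboveI2)
    fix v assume "v \<in> B"
    then have "norm v * K \<le> M * K" using K(1) by (simp add: B_def mult_right_mono)
    then show "P v \<le> M * K" using K(2)[of v] by simp
  qed
  define s where "s = (SUP v\<in>B. P v)"
  obtain w where w: "w \<in> B" "s - e < P w"
    using less_cSUP_iff[OF _ bdd, of "s - e"] \<open>0 \<in> B\<close> e unfolding s_def by force
  have "P z \<le> P (inf z w) + e" if z: "0 \<le> z" "norm z \<le> M" for z
  proof -
    have "P z + P w = P (sup z w) + P (inf z w)" by (metis P.add add_eq_inf_sup)
    moreover have "sup z w \<in> B" using z w(1) by (auto simp: B_def am_norm intro: le_supI1)
    then have "P (sup z w) \<le> s" unfolding s_def using bdd by (rule cSUP_upper)
    ultimately show ?thesis using w(2) by simp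
  qed
  then show ?thesis using w(1) by (auto simp: B_def)
next
  case False
  then have "\<not> norm z \<le> M" for z :: 'a using norm_ge_zero[of z] by linarith
  then show ?thesis by (intro exI[of _ 0]) auto
qed

lemma weakly_convergent_if_uaw_convergent_bounded:
  fixes x :: "nat \<Rightarrow> 'a::am_space"
  assumes bounded: "bounded (range x)" and uaw: "uaw_convergent_to x 0"
  shows "weakly_convergent_to x 0"
  unfolding weakly_convergent_to_0_iff_positive
proof (intro allI impI)
  fix P :: "'a \<Rightarrow> real" assume P: "positive_functional P"
  obtain M where M: "\<And>n. norm (x n) \<le> M" using bounded unfolding bounded_iff by blast
  have "(\<lambda>n. P (lmod (x n))) \<longlonglongrightarrow> 0"
  proof (rule LIMSEQ_I)
    fix e :: real assume e: "0 < e"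
    obtain w where w: "0 \<le> w" "\<And>z. 0 \<le> z \<Longrightarrow> norm z \<le> M \<Longrightarrow> P z \<le> P (inf z w) + e / 2"
      using positive_functional_ex_inf_le[OF P, of "e / 2" M] e by auto
    have "(\<lambda>n. P (inf (lmod (x n)) w)) \<longlonglongrightarrow> 0"
      using uaw P w(1) unfolding uaw_convergent_to_0_iff_positive by blast
    then obtain N where N: "\<And>n. n \<ge> N \<Longrightarrow> \<bar>P (inf (lmod (x n)) w)\<bar> < e / 2"
      using LIMSEQ_D[of _ 0 "e / 2"] e by force
    have "norm (P (lmod (x n)) - 0) < e" if "n \<ge> N" for n
    proof -
      have "P (lmod (x n)) \<le> P (inf (lmod (x n)) w) + e / 2"
        using M[of n] by (intro w(2)) (simp_all add: lmod_nonneg norm_lmod)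
      moreover have "0 \<le> P (lmod (x n))"
        using P lmod_nonneg[of "x n"] unfolding positive_functional_def by blast
      ultimately show ?thesis using N[OF that] by simp
    qed
    then show "\<exists>N. \<forall>n\<ge>N. norm (P (lmod (x n)) - 0) < e" by blast
  qed
  then show "(\<lambda>n. P (x n)) \<longlonglongrightarrow> 0"
    by (rule Lim_null_comparison[rotated]) (simp add: positive_functional_abs_le[OF P])
qed

primrec block_sup :: "(nat \<Rightarrow> 'a::lattice) \<Rightarrow> nat \<Rightarrow> nat \<Rightarrow> 'a" where
  "block_sup g n 0 = g n"
| "block_sup g n (Suc l) = sup (block_sup g n l) (g (n + Suc l))"

lemma block_sup_upper: "n \<le> k \<Longrightarrow> k \<le> n + l \<Longrightarrow> g k \<le> block_sup g n l"
proof (induction l)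
  case (Suc l)
  then show ?case by (cases "k \<le> n + l") (auto intro: le_supI1 simp: le_Suc_eq)
qed simp

lemma block_sup_least: "(\<And>k. n \<le> k \<Longrightarrow> k \<le> n + l \<Longrightarrow> g k \<le> v) \<Longrightarrow> block_sup g n l \<le> v"
  by (induction l) auto

lemma block_sup_mono: "l \<le> l' \<Longrightarrow> block_sup g n l \<le> block_sup g n l'"
  by (rule block_sup_least, rule block_sup_upper) auto

lemma block_sup_Suc_le: "block_sup g (Suc n) l \<le> block_sup g n (Suc l)"
  by (rule block_sup_least, rule block_sup_upper) auto

lemma lattice_hom_block_sup:
  assumes hom: "\<And>a b. \<phi> (sup a b) = max (\<phi> a) (\<phi> b :: real)"
  shows "\<exists>k. n \<le> k \<and> k \<le> n + l \<and> \<phi> (block_sup g n l) = \<phi> (g k)"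
proof (induction l)
  case (Suc l)
  then obtain k where k: "n \<le> k" "k \<le> n + l" "\<phi> (block_sup g n l) = \<phi> (g k)" by blast
  show ?case
  proof (cases "\<phi> (g (n + Suc l)) \<le> \<phi> (block_sup g n l)")
    case True
    then show ?thesis using k by (intro exI[of _ k]) (simp add: hom max_def)
  next
    case False
    then show ?thesis by (intro exI[of _ "n + Suc l"]) (simp add: hom max_def)
  qed
qed auto

text \<open>Let a j be the supremum of P over the block suprema starting at j and choose such a block
  supremum H j with a j - P (H j) < e j = \<delta> / 2 ^ (j + 2). The running infima D j of the H j satisfy
  the invariant a j - \<delta> / 2 + e j \<le> P (D j), since P (sup (D j) (H (Suc j))) \<le> a j.\<close>

lemma ex_decreasing_below_block_sups:
  fixes g :: "nat \<Rightarrow> 'a::banach_lattice"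
  assumes P: "positive_functional P" and g: "\<And>n. 0 \<le> g n" "\<And>n. g n \<le> u"
    and \<delta>: "0 < \<delta>" "\<And>N. \<exists>k\<ge>N. \<delta> \<le> P (g k)"
  shows "\<exists>D L. (\<forall>j. 0 \<le> D j) \<and> (\<forall>j. D (Suc j) \<le> D j) \<and> (\<forall>j. D j \<le> block_sup g j (L j))
    \<and> (\<forall>j. \<delta> / 2 \<le> P (D j))"
proof -
  interpret P: bounded_linear P using P by (simp add: positive_functional_def)
  define a where "a j = (SUP l. P (block_sup g j l))" for j
  have bdd: "bdd_above (range (\<lambda>l. P (block_sup g j l)))" for j
    using P g(2) by (intro bdd_aboveI[of _ "P u"]) (auto intro: positive_functional_mono block_sup_least)
  have a_ge: "P (block_sup g j l) \<le> a j" for j l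
    unfolding a_def using bdd by (rule cSUP_upper[OF UNIV_I])
  have \<delta>_le_a: "\<delta> \<le> a j" for j
  proof -
    obtain k where k: "k \<ge> j" "\<delta> \<le> P (g k)" using \<delta>(2) by blast
    have "P (g k) \<le> P (block_sup g j (k - j))"
      using P k(1) by (intro positive_functional_mono block_sup_upper) auto
    then show ?thesis using k a_ge[of j "k - j"] by simp
  qed
  define e where "e j = \<delta> / 2 ^ (j + 2)" for j :: nat
  have e_pos: "0 < e j" for j using \<delta>(1) by (simp add: e_def)
  have "\<exists>l. a j - e j < P (block_sup g j l)" for j
    using less_cSUP_iff[OF _ bdd, of "a j - e j" j] e_pos[of j] unfolding a_def by auto
  then obtain L where L: "\<And>j. a j - e j < P (block_sup g j (L j))" by metis
  define H where "H j = block_sup g j (L j)" for j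
  define D where "D = rec_nat (H 0) (\<lambda>j d. inf d (H (Suc j)))"
  have D_0: "D 0 = H 0" and D_Suc: "D (Suc j) = inf (D j) (H (Suc j))" for j
    by (simp_all add: D_def)
  have D_le_H: "D j \<le> H j" for j by (cases j) (simp_all add: D_0 D_Suc)
  have D_nonneg: "0 \<le> D j" for j
  proof (induction j)
    case 0 show ?case using g(1)[of 0] block_sup_upper[of 0 0 "L 0" g] by (simp add: D_0 H_def)
  next
    case (Suc j)
    have "0 \<le> H (Suc j)"
      using g(1)[of "Suc j"] block_sup_upper[of "Suc j" "Suc j" "L (Suc j)" g] by (simp add: H_def)
    then show ?case using Suc by (simp add: D_Suc)
  qed
  have invariant: "a j - \<delta> / 2 + e j \<le> P (D j)" for j
  proof (induction j)
    case 0
    then show ?case using L[of 0] by (simp add: D_0 H_def e_def)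
  next
    case (Suc j)
    define M where "M = max (L j) (Suc (L (Suc j)))"
    have "D j \<le> block_sup g j M"
      using D_le_H[of j] block_sup_mono[of "L j" M g j] by (auto simp: H_def M_def)
    moreover have "H (Suc j) \<le> block_sup g j M"
      using block_sup_Suc_le[of g j "L (Suc j)"] block_sup_mono[of "Suc (L (Suc j))" M g j]
      unfolding H_def M_def by (meson max.cobounded2 order.trans)
    ultimately have "P (sup (D j) (H (Suc j))) \<le> a j"
      using P a_ge[of j M] by (meson order.trans positive_functional_mono sup_least)
    moreover have "P (D (Suc j)) = P (D j) + P (H (Suc j)) - P (sup (D j) (H (Suc j)))"
      using arg_cong[OF add_eq_inf_sup[of "D j" "H (Suc j)"], of P] by (simp add: D_Suc P.add)
    moreover have "e j = 2 * e (Suc j)" by (simp add: e_def)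
    ultimately show ?case using Suc.IH L[of "Suc j"] by (simp add: H_def)
  qed
  have "\<delta> / 2 \<le> P (D j)" for j using invariant[of j] \<delta>_le_a[of j] e_pos[of j] by simp
  moreover have "D (Suc j) \<le> D j" for j by (simp add: D_Suc)
  ultimately show ?thesis using D_nonneg D_le_H unfolding H_def by blast
qed

lemma uaw_convergent_if_weakly_convergent:
  fixes x :: "nat \<Rightarrow> 'a::am_space"
  assumes weak: "weakly_convergent_to x 0"
  shows "uaw_convergent_to x 0"
  unfolding uaw_convergent_to_0_iff_positive
proof (intro allI impI)
  fix u :: 'a and P :: "'a \<Rightarrow> real" assume u: "0 \<le> u" and P: "positive_functional P"
  define g where "g n = inf (lmod (x n)) u" for n
  have g: "0 \<le> g n" "g n \<le> u" for n using u lmod_nonneg[of "x n"] by (simp_all add: g_def)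
  show "(\<lambda>n. P (g n)) \<longlonglongrightarrow> 0"
  proof (rule ccontr)
    assume "\<not> (\<lambda>n. P (g n)) \<longlonglongrightarrow> 0"
    then obtain \<delta> where \<delta>: "0 < \<delta>" "\<And>N. \<exists>k\<ge>N. \<not> \<bar>P (g k)\<bar> < \<delta>"
      unfolding LIMSEQ_iff real_norm_def diff_zero by blast
    have Pg: "0 \<le> P (g k)" for k using P g(1) unfolding positive_functional_def by blast
    have frequently: "\<exists>k\<ge>N. \<delta> \<le> P (g k)" for N using \<delta>(2)[of N] Pg by (auto simp: not_less)
    obtain D L where D: "\<And>j. 0 \<le> D j" "\<And>j. D (Suc j) \<le> D j" "\<And>j. D j \<le> block_sup g j (L j)"
      and PD: "\<And>j. \<delta> / 2 \<le> P (D j)"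
      using ex_decreasing_below_block_sups[OF P g \<delta>(1) frequently] by blast
    interpret P: bounded_linear P using P by (simp add: positive_functional_def)
    obtain K where K: "0 < K" "\<And>v. norm (P v) \<le> norm v * K" using P.pos_bounded by blast
    define \<eta> where "\<eta> = \<delta> / (2 * K)"
    have \<eta>_le: "\<eta> \<le> norm (D j)" for j
      using PD[of j] K(2)[of "D j"] K(1) by (simp add: \<eta>_def field_simps)
    obtain \<phi> where \<phi>: "lattice_hom_functional \<phi>" "\<And>x. \<bar>\<phi> x\<bar> \<le> norm x" "\<And>j. \<eta> \<le> \<phi> (D j)"
      using ex_lattice_hom_functional_ge_on_decreasing[of D \<eta>, OF D(1,2) \<eta>_le] by blast
    have \<phi>_bl: "bounded_linear \<phi>" using \<phi>(1,2) by (rule bounded_linear_lattice_hom_functional)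
    then have "(\<lambda>k. \<phi> (x k)) \<longlonglongrightarrow> \<phi> 0" using weak unfolding weakly_convergent_to_def by blast
    moreover have "0 < \<eta>" using \<delta>(1) K(1) by (simp add: \<eta>_def)
    ultimately obtain N where N: "\<And>k. k \<ge> N \<Longrightarrow> \<bar>\<phi> (x k)\<bar> < \<eta>"
      using LIMSEQ_D[of _ "\<phi> 0" \<eta>] \<phi>_bl by (auto simp: linear_0 bounded_linear.linear)
    obtain k where k: "N \<le> k" "\<phi> (block_sup g N (L N)) = \<phi> (g k)"
      using lattice_hom_block_sup[of \<phi> N "L N" g] \<phi>(1) unfolding lattice_hom_functional_def by blast
    have "\<eta> \<le> \<phi> (D N)" by (rule \<phi>(3))
    also have "\<dots> \<le> \<phi> (g k)" using lattice_hom_functional_mono[OF \<phi>(1) D(3)[of N]] k(2) by simp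
    also have "\<dots> \<le> \<phi> (lmod (x k))" unfolding g_def by (rule lattice_hom_functional_mono[OF \<phi>(1)]) simp
    also have "\<dots> = \<bar>\<phi> (x k)\<bar>" by (rule lattice_hom_functional_lmod[OF \<phi>(1)])
    finally show False using N[OF k(1)] by simp
  qed
qed

lemma Baire_ex_nonempty_interior:
  fixes F :: "nat \<Rightarrow> 'a::complete_space set"
  assumes closed: "\<And>k. closed (F k)" and cover: "(\<Union>k. F k) = UNIV"
  shows "\<exists>k. interior (F k) \<noteq> {}"
proof (rule ccontr)
  assume "\<nexists>k. interior (F k) \<noteq> {}"
  then have empty: "euclidean interior_of F k = {}" for k by (simp only: euclidean_interior_of) blast
  have "euclidean interior_of \<Union>(range F) = {}"
  proof (rule Baire_category_alt)
    show "completely_metrizable_space (euclidean :: 'a topology) \<or>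
        locally_compact_space (euclidean :: 'a topology) \<and> regular_space (euclidean :: 'a topology)"
      using completely_metrizable_space_euclidean by blast
    fix T assume "T \<in> range F"
    then obtain k where "T = F k" by blast
    then show "closedin euclidean T \<and> euclidean interior_of T = {}"
      using closed[of k] empty[of k] by (simp only: closed_closedin)
  qed simp
  then show False using cover by simp
qed

lemma uniform_bound_on_dual:
  fixes x :: "nat \<Rightarrow> 'a::real_normed_vector"
  assumes bounded: "\<And>f::'a \<Rightarrow>\<^sub>L real. bounded (range (\<lambda>n. blinfun_apply f (x n)))"
  shows "\<exists>C. \<forall>(f::'a \<Rightarrow>\<^sub>L real) n. \<bar>blinfun_apply f (x n)\<bar> \<le> C * norm f"
proof -
  define F where "F k = {f :: 'a \<Rightarrow>\<^sub>L real. \<forall>n. \<bar>blinfun_apply f (x n)\<bar> \<le> real k}" for k :: nat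
  have "closed (F k)" for k
  proof -
    have "continuous_on UNIV (\<lambda>f::'a \<Rightarrow>\<^sub>L real. \<bar>blinfun_apply f a\<bar>)" for a
      by (intro continuous_intros)
    then have "closed {f::'a \<Rightarrow>\<^sub>L real. \<bar>blinfun_apply f (x n)\<bar> \<le> real k}" for n
      by (rule closed_Collect_le[OF _ continuous_on_const])
    moreover have "F k = (\<Inter>n. {f. \<bar>blinfun_apply f (x n)\<bar> \<le> real k})" by (auto simp: F_def)
    ultimately show ?thesis by (simp add: closed_INT)
  qed
  moreover have "(\<Union>k. F k) = UNIV"
  proof -
    have "\<exists>k. f \<in> F k" for f
    proof -
      obtain B where "\<And>n. \<bar>blinfun_apply f (x n)\<bar> \<le> B" using bounded[of f] by (auto simp: bounded_iff)
      then have "f \<in> F (nat \<lceil>B\<rceil>)"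
        using real_nat_ceiling_ge[of B] unfolding F_def by (blast intro: order.trans)
      then show ?thesis by blast
    qed
    then show ?thesis by blast
  qed
  ultimately obtain k where "interior (F k) \<noteq> {}" using Baire_ex_nonempty_interior by blast
  then obtain f0 r where r: "0 < r" "ball f0 r \<subseteq> F k" by (auto simp: mem_interior)
  then have f0: "f0 \<in> F k" by auto
  have "\<bar>blinfun_apply f (x n)\<bar> \<le> 4 * real k / r * norm f" for f n
  proof (cases "f = 0")
    case False
    define c where "c = r / (2 * norm f)"
    have c: "0 < c" using r(1) False by (simp add: c_def)
    have "f0 + c *\<^sub>R f \<in> F k" using r c False by (intro subsetD[OF r(2)]) (simp add: dist_norm c_def)
    then have "\<bar>blinfun_apply f0 (x n) + c * blinfun_apply f (x n)\<bar> \<le> real k"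
      by (simp add: F_def blinfun.add_left blinfun.scaleR_left)
    moreover have "\<bar>blinfun_apply f0 (x n)\<bar> \<le> real k" using f0 by (simp add: F_def)
    ultimately have "c * \<bar>blinfun_apply f (x n)\<bar> \<le> 2 * real k" using c by (simp add: abs_mult)
    then show ?thesis using r(1) False by (simp add: c_def field_simps)
  qed simp
  then show ?thesis by blast
qed

lemma bounded_if_weakly_convergent:
  fixes x :: "nat \<Rightarrow> 'a::am_space"
  assumes weak: "weakly_convergent_to x l"
  shows "bounded (range x)"
proof -
  have "bounded (range (\<lambda>n. blinfun_apply f (x n)))" for f :: "'a \<Rightarrow>\<^sub>L real"
    using weak blinfun.bounded_linear_right unfolding weakly_convergent_to_def
    by (metis convergentI convergent_imp_Bseq Bseq_eq_bounded)
  then obtain C where C: "\<And>(f::'a \<Rightarrow>\<^sub>L real) n. \<bar>blinfun_apply f (x n)\<bar> \<le> C * norm f"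
    using uniform_bound_on_dual by blast
  have "norm (x n) \<le> max C 0" for n
  proof -
    obtain \<phi> where \<phi>: "lattice_hom_functional \<phi>" "\<And>y. \<bar>\<phi> y\<bar> \<le> norm y" "\<bar>\<phi> (x n)\<bar> = norm (x n)"
      using ex_norming_lattice_hom_functional by blast
    have bl: "bounded_linear \<phi>" using \<phi>(1,2) by (rule bounded_linear_lattice_hom_functional)
    have "norm (Blinfun \<phi>) \<le> 1"
      using \<phi>(2) by (intro norm_blinfun_bound) (simp_all add: bounded_linear_Blinfun_apply[OF bl])
    then have "C * norm (Blinfun \<phi>) \<le> max C 0"
      by (cases "0 \<le> C") (auto intro: mult_left_le mult_nonpos_nonneg)
    then show ?thesis using C[of "Blinfun \<phi>" n] \<phi>(3) by (simp add: bounded_linear_Blinfun_apply[OF bl])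
  qed
  then show ?thesis unfolding bounded_iff by blast
qed

theorem corollary3p7:
  fixes T :: "'a::am_space \<Rightarrow> 'b::banach"
  assumes "bounded_linear T"
  shows "uaw_dunford_pettis T \<longleftrightarrow> dunford_pettis T"
proof
  assume "uaw_dunford_pettis T"
  then show "dunford_pettis T"
    unfolding uaw_dunford_pettis_def dunford_pettis_def
    using bounded_if_weakly_convergent uaw_convergent_if_weakly_convergent by blast
next
  assume "dunford_pettis T"
  then show "uaw_dunford_pettis T"
    unfolding uaw_dunford_pettis_def dunford_pettis_def
    using weakly_convergent_if_uaw_convergent_bounded by blast
qed

end
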